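(* Let $d\ge1$, $K\subset\mathbb{R}^d$ compact convex with volume one, and let $\mu_t$ be either a homogeneous Poisson process of intensity $t$ on $K$ (in which case $\chi(t):=t^2$, $\widetilde\chi(t):=t^3$) or a binomial process of $\lceil t\rceil$ independent uniform points in $K$ (in which case $\chi(t):=\lceil t\rceil(\lceil t\rceil-1)$, $\widetilde\chi(t):=\lceil t\rceil^3$), $t\ge1$. There is a constant $C_K>0$ depending only on $d$ and $K$ such that $$\Big|\frac12\mathbb{E}\sum_{(x,y)\in\mu^2_{t,\neq}}\mathbf{1}\big((x+y)/2\in B,\ \|x-y\|\in\tilde A\big)-\frac{\kappa_d}{2}\mathrm{vol}(B)\,t^2d\int_0^\infty\mathbf{1}(r\in\tilde A)r^{d-1}\,dr\Big|\le 2C_K\kappa_dt^2(\tilde a^{d+1}+\tilde a^{2d})+\frac{\kappa_d}{2}t\tilde a^d$$ for all Borel sets $B\subset K$ and $\tilde A\subset[0,\tilde a]$ with $\tilde a>0$. Moreover, $$\widetilde\chi(t)\int_K\Big(\int_K\mathbf{1}\big((x+y)/2\in B,\ \|x-y\|\le u\big)\,dx\Big)^2dy\le 8t^3\kappa_d^2u^{2d}$$ for all Borel sets $B\subset K$ and $u\ge0$.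
   Context: $\kappa_d$ is the volume of the $d$-dimensional unit ball; $\mathrm{vol}$ is Lebesgue measure; $\mu^2_{t,\neq}$ the pairs of distinct points of $\mu_t$. *)

theory Defs
  imports "HOL-Analysis.Analysis"
begin

datatype point_process = Poisson_proc | Binomial_proc

definition binomial_pair_mean ::
  "'a::euclidean_space set \<Rightarrow> nat \<Rightarrow> ('a \<Rightarrow> 'a \<Rightarrow> real) \<Rightarrow> real" where
  "binomial_pair_mean K n f =
     (\<integral>xs. (\<Sum>i<n. \<Sum>j\<in>{..<n} - {i}. f (xs i) (xs j))
        \<partial>(PiM {..<n} (\<lambda>_. uniform_measure lborel K)))"

text \<open>Poisson process of intensity t on K (vol K = 1), realised as a mixed
binomial process with a Poisson(t) number of independent uniform points.\<close>
definition poisson_pair_mean ::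
  "'a::euclidean_space set \<Rightarrow> real \<Rightarrow> ('a \<Rightarrow> 'a \<Rightarrow> real) \<Rightarrow> real" where
  "poisson_pair_mean K t f =
     (\<Sum>n. exp (- t) * t ^ n / fact n * binomial_pair_mean K n f)"

definition pair_mean ::
  "point_process \<Rightarrow> 'a::euclidean_space set \<Rightarrow> real \<Rightarrow> ('a \<Rightarrow> 'a \<Rightarrow> real) \<Rightarrow> real" where
  "pair_mean p K t f = (case p of
      Poisson_proc \<Rightarrow> poisson_pair_mean K t f
    | Binomial_proc \<Rightarrow> binomial_pair_mean K (nat \<lceil>t\<rceil>) f)"

definition chi_tilde :: "point_process \<Rightarrow> real \<Rightarrow> real" where
  "chi_tilde p t = (case p of Poisson_proc \<Rightarrow> t ^ 3 | Binomial_proc \<Rightarrow> real (nat \<lceil>t\<rceil>) ^ 3)"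

end

theory Submission
  imports Defs "HOL-Probability.Probability"
begin

(*
  In midpoint-difference coordinates m = (x + y)/2, w = x - y, the mean number of ordered pairs
  with midpoint in B and distance in A is chi(t) times the integral over |w| in A of the volume of
  {m in B. m - w/2, m + w/2 in K}; for the Poisson process this follows from the binomial case
  because a Poisson(t) variable N has E[N(N-1)] = t^2.  Since K is a convex body, shrinking K
  towards an interior ball shows vol(K - (v + K)) <= D |v|, so the section volume differs from
  vol(B) by at most D |w|.  Integrating in polar coordinates yields the main term
  kappa_d d vol(B) int_A r^(d-1) dr with error D a kappa_d a^d, and |chi(t) - t^2| <= t gives the
  remaining term.  The second inequality only uses that the inner integral is at most the volume
  kappa_d u^d of a ball.
*)

lemma homothety_subset_translation:
  fixes K :: "'a::real_normed_vector set"
  assumes "convex K" "cball c \<rho> \<subseteq> K" "0 < norm v" "norm v < \<rho>"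
  defines "l \<equiv> 1 - norm v / \<rho>"
  shows "(\<lambda>x. l *\<^sub>R x + (1 - l) *\<^sub>R c) ` K \<subseteq> (+) v ` K"
proof
  fix h assume "h \<in> (\<lambda>x. l *\<^sub>R x + (1 - l) *\<^sub>R c) ` K"
  then obtain k where k: "k \<in> K" "h = l *\<^sub>R k + (1 - l) *\<^sub>R c" by blast
  have "0 < \<rho>" using assms(3,4) by linarith
  then have "0 \<le> norm v / \<rho>" "norm v / \<rho> < 1" using assms(4) by auto
  then have l: "0 < l" "l \<le> 1" by (auto simp: l_def)
  define w where "w = c - (\<rho> / norm v) *\<^sub>R v"
  have "w \<in> cball c \<rho>" using assms(3) \<open>0 < \<rho>\<close> by (simp add: w_def dist_norm)
  then have "w \<in> K" using assms(2) by auto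
  have "h - v = l *\<^sub>R k + (1 - l) *\<^sub>R w"
    using assms(3) \<open>0 < \<rho>\<close> by (simp add: k w_def l_def algebra_simps)
  also have "\<dots> \<in> K" using l k \<open>w \<in> K\<close> assms(1) by (intro convexD) auto
  finally show "h \<in> (+) v ` K" by (intro image_eqI[of _ _ "h - v"]) auto
qed

lemma emeasure_Diff_small_translation_le:
  fixes K :: "'a::euclidean_space set"
  assumes "compact K" "convex K" "cball c \<rho> \<subseteq> K" "0 < norm v" "norm v < \<rho>"
  shows "emeasure lborel (K - (+) v ` K) \<le> ennreal (DIM('a) * measure lborel K / \<rho> * norm v)"
proof -
  define l where "l = 1 - norm v / \<rho>"
  have "0 < \<rho>" using assms(4,5) by linarith
  then have "0 \<le> norm v / \<rho>" "norm v / \<rho> < 1" using assms(5) by auto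
  then have l: "0 < l" "l \<le> 1" by (auto simp: l_def)
  define H where "H = (\<lambda>x. l *\<^sub>R x + (1 - l) *\<^sub>R c) ` K"
  have K[measurable]: "K \<in> sets borel" using assms(1) by (simp add: borel_compact)
  have H[measurable]: "H \<in> sets borel" unfolding H_def
    using assms(1) by (intro borel_compact compact_continuous_image continuous_intros)
  have "c \<in> K" using assms(3) \<open>0 < \<rho>\<close> by auto
  then have "H \<subseteq> K" unfolding H_def using l assms(2) by (auto intro!: convexD)
  have fin: "emeasure lborel K < \<infinity>" using emeasure_compact_finite[OF assms(1)] .
  have "H \<subseteq> (+) v ` K"
    using homothety_subset_translation[OF assms(2,3) assms(4,5)] unfolding H_def l_def .
  then have "emeasure lborel (K - (+) v ` K) \<le> emeasure lborel (K - H)"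
    by (intro emeasure_mono) auto
  also have "\<dots> = ennreal (measure lborel (K - H))"
    using emeasure_mono[of "K - H" K lborel] fin by (intro emeasure_eq_ennreal_measure) (auto simp: top_unique)
  also have "\<dots> = ennreal (measure lborel K - measure lborel H)"
    using fin \<open>H \<subseteq> K\<close> by (subst measure_Diff) auto
  also have "\<dots> \<le> ennreal (DIM('a) * measure lborel K / \<rho> * norm v)"
  proof (intro ennreal_leI)
    have "measure lborel H = l ^ DIM('a) * measure lborel K"
      using measure_lebesgue_affine[of l "(1 - l) *\<^sub>R c" K] l H K by (simp add: H_def)
    moreover have "1 - DIM('a) * (norm v / \<rho>) \<le> l ^ DIM('a)"
      using Bernoulli_inequality[of "- (norm v / \<rho>)" "DIM('a)"] l by (simp add: l_def)
    then have "(1 - l ^ DIM('a)) * measure lborel K \<le> DIM('a) * (norm v / \<rho>) * measure lborel K"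
      by (intro mult_right_mono) auto
    ultimately show "measure lborel K - measure lborel H \<le> DIM('a) * measure lborel K / \<rho> * norm v"
      by (simp add: algebra_simps)
  qed
  finally show ?thesis .
qed

lemma emeasure_Diff_translation_le:
  fixes K :: "'a::euclidean_space set"
  assumes "compact K" "convex K" "cball c \<rho> \<subseteq> K" "0 < \<rho>"
  shows "emeasure lborel (K - (+) v ` K) \<le> ennreal (DIM('a) * measure lborel K / \<rho> * norm v)"
proof -
  consider "v = 0" | "\<rho> \<le> norm v" | "0 < norm v" "norm v < \<rho>" by force
  then show ?thesis
  proof cases
    case 1
    then show ?thesis by simp
  next
    case 2
    have "1 \<le> norm v / \<rho>" using 2 assms(4) by simp
    moreover have "1 \<le> real DIM('a)" by (simp add: DIM_positive Suc_le_eq)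
    ultimately have "1 \<le> DIM('a) * (norm v / \<rho>)" by (metis mult_mono' mult_1 zero_le_one)
    then have "measure lborel K * 1 \<le> measure lborel K * (DIM('a) * (norm v / \<rho>))"
      by (rule mult_left_mono) simp
    then have "ennreal (measure lborel K) \<le> ennreal (DIM('a) * measure lborel K / \<rho> * norm v)"
      by (intro ennreal_leI) (simp add: field_simps)
    moreover have "emeasure lborel (K - (+) v ` K) \<le> emeasure lborel K"
      using assms(1) by (intro emeasure_mono) (auto simp: borel_compact)
    ultimately show ?thesis
      using emeasure_compact_finite[OF assms(1)] by (simp add: emeasure_eq_ennreal_measure)
  next
    case 3
    then show ?thesis by (rule emeasure_Diff_small_translation_le[OF assms(1-3)])
  qed
qed

lemma exists_emeasure_Diff_translation_le:
  fixes K :: "'a::euclidean_space set"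
  assumes "compact K" "convex K" "measure lborel K \<noteq> 0"
  obtains D where "0 < D" "\<And>v. emeasure lborel (K - (+) v ` K) \<le> ennreal (D * norm v)"
proof -
  have "\<not> negligible K"
  proof
    assume "negligible K"
    then have "measure lebesgue K = 0" using negligible_iff_measure by blast
    with assms(1,3) show False by (simp add: borel_compact)
  qed
  then obtain c \<rho> where "0 < \<rho>" "cball c \<rho> \<subseteq> K"
    using assms(2) negligible_convex_interior[of K] by (auto simp: mem_interior_cball)
  moreover have "0 < measure lborel K" using assms(3) by (simp add: zero_less_measure_iff)
  ultimately show ?thesis
    using that[of "DIM('a) * measure lborel K / \<rho>"] emeasure_Diff_translation_le[OF assms(1,2)] by simp
qed

lemma mem_translation_iff: "x \<in> (+) u ` K \<longleftrightarrow> x - u \<in> K" for u x :: "'a::ab_group_add"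
  by (auto intro: image_eqI[of _ _ "x - u"])

lemma sets_borel_translation:
  fixes K :: "'a::euclidean_space set"
  assumes [measurable]: "K \<in> sets borel"
  shows "(+) v ` K \<in> sets borel"
proof -
  have "(+) v ` K = {x. x - v \<in> K}" by (auto simp: mem_translation_iff)
  also have "\<dots> \<in> sets borel" by measurable
  finally show ?thesis .
qed

definition midpoint_section :: "'a::real_vector set \<Rightarrow> 'a set \<Rightarrow> 'a \<Rightarrow> 'a set" where
  "midpoint_section K B w = {m \<in> B. m - w /\<^sub>R 2 \<in> K \<and> m + w /\<^sub>R 2 \<in> K}"

lemma borel_measurable_emeasure_midpoint_section:
  fixes K B :: "'a::euclidean_space set"
  assumes [measurable]: "K \<in> sets borel" "B \<in> sets borel"
  shows "(\<lambda>w. emeasure lborel (midpoint_section K B w)) \<in> borel_measurable borel"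
proof -
  have "emeasure lborel (midpoint_section K B w) =
      (\<integral>\<^sup>+m. indicator B m * indicator K (m - w /\<^sub>R 2) * indicator K (m + w /\<^sub>R 2) \<partial>lborel)" for w
  proof -
    have "midpoint_section K B w \<in> sets lborel" unfolding midpoint_section_def by measurable
    then have "emeasure lborel (midpoint_section K B w) = (\<integral>\<^sup>+m. indicator (midpoint_section K B w) m \<partial>lborel)"
      by simp
    also have "\<dots> = (\<integral>\<^sup>+m. indicator B m * indicator K (m - w /\<^sub>R 2) * indicator K (m + w /\<^sub>R 2) \<partial>lborel)"
      by (intro nn_integral_cong) (simp add: midpoint_section_def split: split_indicator)
    finally show ?thesis .
  qed
  then show ?thesis by simp
qed

lemma emeasure_le_midpoint_section:
  fixes K B :: "'a::euclidean_space set"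
  assumes [measurable]: "K \<in> sets borel" "B \<in> sets borel" and "B \<subseteq> K"
    and translate: "\<And>v. emeasure lborel (K - (+) v ` K) \<le> ennreal (D * norm v)" and "0 \<le> D"
  shows "emeasure lborel B \<le> emeasure lborel (midpoint_section K B w) + ennreal (D * norm w)"
proof -
  define E where "E = midpoint_section K B w"
  define S where "S v = K - (+) v ` K" for v
  have [measurable]: "E \<in> sets borel" unfolding E_def midpoint_section_def by measurable
  have [measurable]: "S v \<in> sets borel" for v
    unfolding S_def by (intro sets.Diff sets_borel_translation) auto
  have "B - E \<subseteq> S (w /\<^sub>R 2) \<union> S (- (w /\<^sub>R 2))"
  proof
    fix m assume "m \<in> B - E"
    then have "m \<in> K" "m - w /\<^sub>R 2 \<notin> K \<or> m - - (w /\<^sub>R 2) \<notin> K"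
      using \<open>B \<subseteq> K\<close> by (auto simp: E_def midpoint_section_def)
    then show "m \<in> S (w /\<^sub>R 2) \<union> S (- (w /\<^sub>R 2))"
      by (simp only: S_def Un_iff Diff_iff mem_translation_iff) blast
  qed
  then have "emeasure lborel (B - E) \<le> emeasure lborel (S (w /\<^sub>R 2)) + emeasure lborel (S (- (w /\<^sub>R 2)))"
    by (intro order.trans[OF emeasure_mono emeasure_subadditive]) auto
  also have "\<dots> \<le> ennreal (D * norm (w /\<^sub>R 2)) + ennreal (D * norm (- (w /\<^sub>R 2)))"
    unfolding S_def by (intro add_mono translate)
  also have "\<dots> = ennreal (D * norm w)"
    using \<open>0 \<le> D\<close> by (simp add: ennreal_plus[symmetric] del: ennreal_plus)
  finally have "emeasure lborel (B - E) \<le> ennreal (D * norm w)" .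
  moreover have "emeasure lborel B \<le> emeasure lborel E + emeasure lborel (B - E)"
    using emeasure_subadditive[of E lborel "B - E"] by (auto simp: Un_absorb1 E_def midpoint_section_def)
  ultimately show ?thesis unfolding E_def by (meson add_left_mono order.trans)
qed

lemma emeasure_norm_greaterThan_atMost:
  assumes "x \<le> a" "0 \<le> a"
  shows "emeasure lborel {z::'a::euclidean_space. x < norm z \<and> norm z \<le> a} =
    ennreal (unit_ball_vol DIM('a) * (a ^ DIM('a) - max x 0 ^ DIM('a)))"
proof (cases "x < 0")
  case True
  then have "{z::'a. x < norm z \<and> norm z \<le> a} = cball 0 a"
    by (auto intro: less_le_trans[OF _ norm_ge_zero])
  then show ?thesis using True assms emeasure_cball[of a "0::'a"] by (simp add: zero_power)
next
  case False
  then have "{z::'a. x < norm z \<and> norm z \<le> a} = cball 0 a - cball 0 x" by auto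
  moreover have "emeasure lborel (cball (0::'a) a - cball 0 x) =
      emeasure lborel (cball (0::'a) a) - emeasure lborel (cball (0::'a) x)"
    using False assms emeasure_cball[of x "0::'a"] by (intro emeasure_Diff) auto
  ultimately show ?thesis using False assms emeasure_cball[of a "0::'a"] emeasure_cball[of x "0::'a"]
    by (simp add: ennreal_minus power_mono right_diff_distrib)
qed

lemma nn_integral_power_density_greaterThan:
  fixes c a x :: real and n :: nat
  assumes "0 \<le> c" "0 < n" "x \<le> a" "0 \<le> a"
  shows "(\<integral>\<^sup>+r. ennreal (indicator {0..a} r * (c * n * r ^ (n - 1))) * indicator {x<..} r \<partial>lborel) =
    ennreal (c * (a ^ n - max x 0 ^ n))"
proof -
  have "DERIV (\<lambda>r. c * r ^ n) r :> c * n * r ^ (n - 1)" for r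
    by (auto intro!: derivative_eq_intros)
  then have FTC: "(\<integral>\<^sup>+r. ennreal (c * n * r ^ (n - 1)) * indicator {max x 0..a} r \<partial>lborel) =
      ennreal (c * (a ^ n - max x 0 ^ n))"
    using assms by (subst nn_integral_FTC_Icc) (auto simp: algebra_simps)
  have "AE r in lborel. ennreal (indicator {0..a} r * (c * n * r ^ (n - 1))) * indicator {x<..} r =
      ennreal (c * n * r ^ (n - 1)) * indicator {max x 0..a} r"
    using AE_lborel_singleton[of x] AE_lborel_singleton[of 0]
    by eventually_elim (auto split: split_indicator)
  then show ?thesis unfolding FTC[symmetric] by (rule nn_integral_cong_AE)
qed

lemma distr_norm_density_cball:
  fixes a :: real
  assumes "0 \<le> a"
  defines "d \<equiv> DIM('a::euclidean_space)"
  shows "distr (density (lborel::'a measure) (indicator (cball 0 a))) borel norm =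
    density lborel (\<lambda>r. ennreal (indicator {0..a} r * (unit_ball_vol d * d * r ^ (d - 1))))"
    (is "?L = ?R")
proof (rule measure_eqI_lessThan)
  fix x :: real
  have "norm -` {x<..} \<in> sets (lborel::'a measure)"
    by (simp add: borel_open open_vimage continuous_on_norm_id)
  moreover have "cball (0::'a) a \<in> sets borel" by (simp add: borel_closed)
  ultimately have "emeasure ?L {x<..} =
      (\<integral>\<^sup>+z. indicator (cball 0 a) z * indicator (norm -` {x<..}) z \<partial>(lborel::'a measure))"
    by (simp add: emeasure_distr, subst emeasure_density) (auto intro: borel_measurable_indicator)
  also have "\<dots> = (\<integral>\<^sup>+z. indicator {z::'a. x < norm z \<and> norm z \<le> a} z \<partial>lborel)"
    by (intro nn_integral_cong) (auto split: split_indicator)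
  also have "\<dots> = emeasure lborel {z::'a. x < norm z \<and> norm z \<le> a}"
    by (intro nn_integral_indicator) measurable
  finally have L: "emeasure ?L {x<..} = emeasure lborel {z::'a. x < norm z \<and> norm z \<le> a}" .
  have R: "emeasure ?R {x<..} =
      (\<integral>\<^sup>+r. ennreal (indicator {0..a} r * (unit_ball_vol d * d * r ^ (d - 1))) * indicator {x<..} r \<partial>lborel)"
    by (simp add: emeasure_density)
  show "emeasure ?L {x<..} = emeasure ?R {x<..}"
  proof (cases "x \<le> a")
    case True
    then show ?thesis unfolding L R using assms(1)
      nn_integral_power_density_greaterThan[of "unit_ball_vol DIM('a)" "DIM('a)" x a]
      emeasure_norm_greaterThan_atMost[where 'a='a, of x a] by (simp add: d_def)
  next
    case False
    then have "{z::'a. x < norm z \<and> norm z \<le> a} = {}" by auto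
    then have "emeasure lborel {z::'a. x < norm z \<and> norm z \<le> a} = 0" by (simp only: emeasure_empty)
    moreover have "(\<integral>\<^sup>+r. ennreal (indicator {0..a} r * (unit_ball_vol d * d * r ^ (d - 1))) * indicator {x<..} r \<partial>lborel)
        = (\<integral>\<^sup>+r. 0 \<partial>(lborel::real measure))"
      using False by (intro nn_integral_cong) (auto split: split_indicator)
    ultimately show ?thesis unfolding L R by simp
  qed
  have "emeasure lborel {z::'a. x < norm z \<and> norm z \<le> a} \<le> emeasure lborel (cball (0::'a) a)"
    by (intro emeasure_mono) auto
  then show "emeasure ?L {x<..} < \<infinity>"
    unfolding L using emeasure_compact_finite[of "cball (0::'a) a"] by simp
qed (simp_all)

lemma integral_indicator_norm:
  fixes A :: "real set"
  assumes A[measurable]: "A \<in> sets borel" and "A \<subseteq> {0..a}" and "0 \<le> a"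
  defines "d \<equiv> DIM('a::euclidean_space)"
  shows "(\<integral>z. indicator A (norm z) \<partial>(lborel::'a measure)) =
    unit_ball_vol d * d * (\<integral>r. indicator A r * r ^ (d - 1) \<partial>lborel)"
proof -
  have "(\<integral>\<^sup>+z. indicator A (norm z) \<partial>(lborel::'a measure)) =
      (\<integral>\<^sup>+z. indicator A (norm z) \<partial>density (lborel::'a measure) (indicator (cball 0 a)))"
    using assms(2) borel_closed[OF closed_cball, of "0::'a" a]
    by (subst nn_integral_density) (auto split: split_indicator intro!: nn_integral_cong borel_measurable_indicator)
  also have "\<dots> = (\<integral>\<^sup>+r. indicator A r \<partial>distr (density (lborel::'a measure) (indicator (cball 0 a))) borel norm)"
    by (subst nn_integral_distr) auto
  also have "\<dots> = (\<integral>\<^sup>+r. indicator A r \<partial>density lborel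
      (\<lambda>r. ennreal (indicator {0..a} r * (unit_ball_vol d * d * r ^ (d - 1)))))"
    unfolding d_def distr_norm_density_cball[OF assms(3)] ..
  also have "\<dots> = (\<integral>\<^sup>+r. ennreal (unit_ball_vol d * d) * ennreal (indicator A r * r ^ (d - 1)) \<partial>lborel)"
    using assms(2) by (subst nn_integral_density)
      (auto split: split_indicator simp: ennreal_mult[symmetric] mult_ac intro!: nn_integral_cong)
  also have "\<dots> = ennreal (unit_ball_vol d * d) * (\<integral>\<^sup>+r. ennreal (indicator A r * r ^ (d - 1)) \<partial>lborel)"
    by (intro nn_integral_cmult) measurable
  finally show ?thesis using assms(2)
    by (subst (1 2) integral_eq_nn_integral)
      (auto split: split_indicator simp: enn2real_mult ennreal_indicator intro!: AE_I2)
qed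

lemma nn_integral_lborel_translate:
  fixes g :: "'a::euclidean_space \<Rightarrow> ennreal"
  assumes "g \<in> borel_measurable borel"
  shows "(\<integral>\<^sup>+y. g y \<partial>lborel) = (\<integral>\<^sup>+w. g (c + w) \<partial>lborel)"
proof -
  have "(\<integral>\<^sup>+y. g y \<partial>lborel) = (\<integral>\<^sup>+y. g y \<partial>distr lborel borel ((+) c))"
    by (simp add: lborel_distr_plus)
  also have "\<dots> = (\<integral>\<^sup>+w. g (c + w) \<partial>lborel)"
    using assms by (subst nn_integral_distr) auto
  finally show ?thesis .
qed

lemma nn_integral_lborel_midpoint_coordinates:
  fixes f :: "'a::euclidean_space \<Rightarrow> 'a \<Rightarrow> ennreal"
  assumes [measurable]: "case_prod f \<in> borel_measurable (lborel \<Otimes>\<^sub>M lborel)"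
  shows "(\<integral>\<^sup>+x. \<integral>\<^sup>+y. f x y \<partial>lborel \<partial>lborel) =
    (\<integral>\<^sup>+w. \<integral>\<^sup>+m. f (m - w /\<^sub>R 2) (m + w /\<^sub>R 2) \<partial>lborel \<partial>lborel)"
proof -
  have "(\<integral>\<^sup>+x. \<integral>\<^sup>+y. f x y \<partial>lborel \<partial>lborel) = (\<integral>\<^sup>+x. \<integral>\<^sup>+w. f x (x + w) \<partial>lborel \<partial>lborel)"
    by (intro nn_integral_cong nn_integral_lborel_translate) simp
  also have "\<dots> = (\<integral>\<^sup>+w. \<integral>\<^sup>+x. f x (x + w) \<partial>lborel \<partial>lborel)"
    by (intro lborel_pair.Fubini') simp
  also have "\<dots> = (\<integral>\<^sup>+w. \<integral>\<^sup>+m. f (- w /\<^sub>R 2 + m) (- w /\<^sub>R 2 + m + w) \<partial>lborel \<partial>lborel)"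
    by (intro nn_integral_cong nn_integral_lborel_translate) simp
  also have "\<dots> = (\<integral>\<^sup>+w. \<integral>\<^sup>+m. f (m - w /\<^sub>R 2) (m + w /\<^sub>R 2) \<partial>lborel \<partial>lborel)"
  proof -
    have mid: "- w /\<^sub>R 2 + m = m - w /\<^sub>R 2" "m - w /\<^sub>R 2 + w = m + w /\<^sub>R 2" for w m :: 'a
      by (simp_all add: algebra_simps scaleR_2[symmetric])
    show ?thesis unfolding mid ..
  qed
  finally show ?thesis .
qed

lemma nn_integral_uniform_measure_pair:
  fixes f :: "'a::euclidean_space \<Rightarrow> 'a \<Rightarrow> ennreal"
  assumes K[measurable]: "K \<in> sets borel" and "emeasure lborel K = 1"
    and [measurable]: "case_prod f \<in> borel_measurable (lborel \<Otimes>\<^sub>M lborel)"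
  shows "(\<integral>\<^sup>+z. f (fst z) (snd z) \<partial>(uniform_measure lborel K \<Otimes>\<^sub>M uniform_measure lborel K)) =
    (\<integral>\<^sup>+x. \<integral>\<^sup>+y. indicator K x * indicator K y * f x y \<partial>lborel \<partial>lborel)"
proof -
  define U where "U = uniform_measure lborel K"
  interpret U: prob_space U
    unfolding U_def using assms(2) by (intro prob_space_uniform_measure) auto
  have sets_U: "sets U = sets lborel" by (simp add: U_def)
  have "case_prod f \<in> borel_measurable (U \<Otimes>\<^sub>M U)"
    by (simp add: measurable_cong_sets[OF sets_pair_measure_cong[OF sets_U sets_U] refl])
  then have "(\<integral>\<^sup>+z. f (fst z) (snd z) \<partial>(U \<Otimes>\<^sub>M U)) = (\<integral>\<^sup>+x. \<integral>\<^sup>+y. f x y \<partial>U \<partial>U)"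
    using U.nn_integral_fst[of "case_prod f" U] by (simp add: case_prod_beta')
  also have "\<dots> = (\<integral>\<^sup>+x. indicator K x * \<integral>\<^sup>+y. indicator K y * f x y \<partial>lborel \<partial>lborel)"
    unfolding U_def using assms(2)
    by (simp add: nn_integral_uniform_measure divide_ennreal_def mult.commute)
  also have "\<dots> = (\<integral>\<^sup>+x. \<integral>\<^sup>+y. indicator K x * indicator K y * f x y \<partial>lborel \<partial>lborel)"
    by (intro nn_integral_cong) (simp add: nn_integral_cmult[symmetric] mult.assoc)
  finally show ?thesis by (simp add: U_def)
qed

lemma nn_integral_uniform_pair_midpoint:
  fixes K B :: "'a::euclidean_space set" and A :: "real set"
  assumes [measurable]: "K \<in> sets borel" "B \<in> sets borel" "A \<in> sets borel"
    and "emeasure lborel K = 1"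
  shows "(\<integral>\<^sup>+z. ennreal (indicator B ((fst z + snd z) /\<^sub>R 2) * indicator A (norm (fst z - snd z)))
      \<partial>(uniform_measure lborel K \<Otimes>\<^sub>M uniform_measure lborel K)) =
    (\<integral>\<^sup>+w. indicator A (norm w) * emeasure lborel (midpoint_section K B w) \<partial>lborel)"
proof -
  have mid: "(m - w /\<^sub>R 2 + (m + w /\<^sub>R 2)) /\<^sub>R 2 = m" "m - w /\<^sub>R 2 - (m + w /\<^sub>R 2) = - w" for m w :: 'a
    by (simp_all add: algebra_simps scaleR_2[symmetric])
  have "(\<integral>\<^sup>+z. ennreal (indicator B ((fst z + snd z) /\<^sub>R 2) * indicator A (norm (fst z - snd z)))
      \<partial>(uniform_measure lborel K \<Otimes>\<^sub>M uniform_measure lborel K)) =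
    (\<integral>\<^sup>+x. \<integral>\<^sup>+y. indicator K x * indicator K y *
      ennreal (indicator B ((x + y) /\<^sub>R 2) * indicator A (norm (x - y))) \<partial>lborel \<partial>lborel)"
    by (rule nn_integral_uniform_measure_pair[OF _ assms(4)]) measurable
  also have "\<dots> = (\<integral>\<^sup>+w. \<integral>\<^sup>+m. indicator K (m - w /\<^sub>R 2) * indicator K (m + w /\<^sub>R 2) *
        ennreal (indicator B ((m - w /\<^sub>R 2 + (m + w /\<^sub>R 2)) /\<^sub>R 2) *
        indicator A (norm (m - w /\<^sub>R 2 - (m + w /\<^sub>R 2)))) \<partial>lborel \<partial>lborel)"
    by (rule nn_integral_lborel_midpoint_coordinates) measurable
  also have "\<dots> = (\<integral>\<^sup>+w. \<integral>\<^sup>+m. indicator A (norm w) *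
      indicator (midpoint_section K B w) m \<partial>lborel \<partial>lborel)"
    unfolding mid by (intro nn_integral_cong) (simp add: midpoint_section_def split: split_indicator)
  also have "\<dots> = (\<integral>\<^sup>+w. indicator A (norm w) * emeasure lborel (midpoint_section K B w) \<partial>lborel)"
    using assms(1,2) by (intro nn_integral_cong) (simp add: nn_integral_cmult midpoint_section_def)
  finally show ?thesis .
qed

lemma abs_enn2real_diff_le:
  assumes "X \<le> ennreal b * ennreal p" "ennreal b * ennreal p \<le> X + ennreal c * ennreal p"
    and "0 \<le> b" "0 \<le> c" "0 \<le> p"
  shows "enn2real X \<le> b * p" "\<bar>enn2real X - b * p\<bar> \<le> c * p"
proof -
  obtain x where x: "X = ennreal x" "0 \<le> x"
    using assms(1,3,5) by (cases X) (auto simp: top_unique ennreal_mult[symmetric])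
  have "x \<le> b * p" "b * p \<le> x + c * p"
    using assms x by (simp_all add: ennreal_mult[symmetric] ennreal_plus[symmetric] del: ennreal_plus)
  then show "enn2real X \<le> b * p" "\<bar>enn2real X - b * p\<bar> \<le> c * p" using x by auto
qed

lemma nn_integral_indicator_norm_le:
  fixes A :: "real set"
  assumes "A \<subseteq> {0..a}" "0 \<le> a"
  shows "(\<integral>\<^sup>+w. indicator A (norm w) \<partial>(lborel::'a::euclidean_space measure))
    \<le> ennreal (unit_ball_vol DIM('a) * a ^ DIM('a))"
proof -
  have "(\<integral>\<^sup>+w. indicator A (norm w) \<partial>(lborel::'a measure)) \<le> (\<integral>\<^sup>+w. indicator (cball (0::'a) a) w \<partial>lborel)"
    using assms(1) by (intro nn_integral_mono) (auto split: split_indicator)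
  also have "\<dots> = ennreal (unit_ball_vol DIM('a) * a ^ DIM('a))"
    using emeasure_cball[OF assms(2), of "0::'a"] by simp
  finally show ?thesis .
qed

lemma nn_integral_midpoint_section_bounds:
  fixes K B :: "'a::euclidean_space set" and A :: "real set"
  assumes [measurable]: "K \<in> sets borel" "B \<in> sets borel" "A \<in> sets borel"
    and "B \<subseteq> K" "A \<subseteq> {0..a}"
    and translate: "\<And>v. emeasure lborel (K - (+) v ` K) \<le> ennreal (D * norm v)" and "0 \<le> D"
  defines "P \<equiv> \<integral>\<^sup>+w. indicator A (norm w) \<partial>(lborel::'a measure)"
    and "J \<equiv> \<integral>\<^sup>+w. indicator A (norm w) * emeasure lborel (midpoint_section K B w) \<partial>(lborel::'a measure)"
  shows "J \<le> emeasure lborel B * P" "emeasure lborel B * P \<le> J + ennreal (D * a) * P"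
proof -
  note [measurable] = borel_measurable_emeasure_midpoint_section[OF assms(1,2)]
  have "J \<le> (\<integral>\<^sup>+w. emeasure lborel B * indicator A (norm w) \<partial>(lborel::'a measure))"
    unfolding J_def midpoint_section_def
    by (intro nn_integral_mono) (auto intro!: emeasure_mono split: split_indicator)
  then show "J \<le> emeasure lborel B * P"
    unfolding P_def by (simp add: nn_integral_cmult)
  have "emeasure lborel B * indicator A (norm w) \<le>
      indicator A (norm w) * emeasure lborel (midpoint_section K B w) + ennreal (D * a) * indicator A (norm w)"
    for w :: 'a
  proof (cases "norm w \<in> A")
    case True
    then have "ennreal (D * norm w) \<le> ennreal (D * a)"
      using \<open>A \<subseteq> {0..a}\<close> \<open>0 \<le> D\<close> by (intro ennreal_leI mult_left_mono) auto
    then show ?thesis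
      using True emeasure_le_midpoint_section[OF assms(1,2,4) translate \<open>0 \<le> D\<close>, of w]
      by (simp add: add_left_mono order.trans)
  qed simp
  then have "(\<integral>\<^sup>+w. emeasure lborel B * indicator A (norm w) \<partial>(lborel::'a measure)) \<le> (\<integral>\<^sup>+w.
      indicator A (norm w) * emeasure lborel (midpoint_section K B w) + ennreal (D * a) * indicator A (norm w)
      \<partial>(lborel::'a measure))"
    by (intro nn_integral_mono)
  then show "emeasure lborel B * P \<le> J + ennreal (D * a) * P"
    unfolding J_def P_def by (simp add: nn_integral_add nn_integral_cmult)
qed

lemma uniform_pair_midpoint_integral_estimate:
  fixes K B :: "'a::euclidean_space set" and A :: "real set"
  assumes [measurable]: "K \<in> sets borel" "B \<in> sets borel" "A \<in> sets borel"
    and K: "emeasure lborel K = 1" and "B \<subseteq> K" and "A \<subseteq> {0..a}" and "0 \<le> a"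
    and translate: "\<And>v. emeasure lborel (K - (+) v ` K) \<le> ennreal (D * norm v)" and "0 \<le> D"
  defines "J \<equiv> \<integral>z. indicator B ((fst z + snd z) /\<^sub>R 2) * indicator A (norm (fst z - snd z))
      \<partial>(uniform_measure lborel K \<Otimes>\<^sub>M uniform_measure lborel K)"
    and "P \<equiv> \<integral>z. indicator A (norm z) \<partial>(lborel::'a measure)"
  shows "J \<le> P" "\<bar>J - measure lborel B * P\<bar> \<le> D * a * P"
    and "P \<le> unit_ball_vol DIM('a) * a ^ DIM('a)"
proof -
  note bounds = nn_integral_midpoint_section_bounds[OF assms(1-3,5,6) translate \<open>0 \<le> D\<close>]
  have "sets (uniform_measure lborel K \<Otimes>\<^sub>M uniform_measure lborel K) = sets (borel \<Otimes>\<^sub>M borel)"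
    by (intro sets_pair_measure_cong) simp_all
  then have "(\<lambda>z. indicator B ((fst z + snd z) /\<^sub>R 2) * indicator A (norm (fst z - snd z)) :: real)
      \<in> borel_measurable (uniform_measure lborel K \<Otimes>\<^sub>M uniform_measure lborel K)"
    unfolding measurable_cong_sets[OF \<open>sets _ = _\<close> refl] by measurable
  then have J: "J = enn2real (\<integral>\<^sup>+w. indicator A (norm w) * emeasure lborel (midpoint_section K B w) \<partial>lborel)"
    unfolding J_def nn_integral_uniform_pair_midpoint[OF assms(1-3) K, symmetric]
    by (rule integral_eq_nn_integral) (auto intro!: AE_I2)
  have "(\<integral>\<^sup>+w. indicator A (norm w) \<partial>(lborel::'a measure)) = ennreal P"
    using nn_integral_indicator_norm_le[OF assms(6,7), where 'a='a] unfolding P_def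
    by (subst integral_eq_nn_integral) (auto simp: ennreal_indicator ennreal_enn2real_if top_unique)
  moreover have "emeasure lborel B \<le> 1" using emeasure_mono[OF \<open>B \<subseteq> K\<close>, of lborel] K by simp
  then have "emeasure lborel B = ennreal (measure lborel B)"
    by (intro emeasure_eq_ennreal_measure) (auto simp: top_unique)
  moreover have "measure lborel B \<le> 1"
    using \<open>emeasure lborel B \<le> 1\<close> unfolding \<open>emeasure lborel B = _\<close> by simp
  moreover have "0 \<le> P" unfolding P_def by simp
  ultimately have "\<bar>J - measure lborel B * P\<bar> \<le> D * a * P" "J \<le> measure lborel B * P"
    "P \<le> unit_ball_vol DIM('a) * a ^ DIM('a)" "measure lborel B \<le> 1"
    using abs_enn2real_diff_le[OF bounds[unfolded \<open>emeasure lborel B = _\<close> \<open>_ = ennreal P\<close>]]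
      nn_integral_indicator_norm_le[OF assms(6,7), where 'a='a] \<open>0 \<le> D\<close> \<open>0 \<le> a\<close>
    by (auto simp: J)
  then show "\<bar>J - measure lborel B * P\<bar> \<le> D * a * P" "P \<le> unit_ball_vol DIM('a) * a ^ DIM('a)"
    and "J \<le> P" using \<open>0 \<le> P\<close> by (auto intro: order.trans mult_left_le_one_le)
qed

lemma distr_PiM_pair_components:
  assumes "prob_space M" and "i \<in> I" "j \<in> I" "i \<noteq> j"
  shows "distr (PiM I (\<lambda>_. M)) (M \<Otimes>\<^sub>M M) (\<lambda>\<omega>. (\<omega> i, \<omega> j)) = M \<Otimes>\<^sub>M M"
proof (rule pair_measure_eqI[symmetric])
  interpret prob_space M by fact
  show "sigma_finite_measure M" "sigma_finite_measure M" by unfold_locales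
  show "sets (M \<Otimes>\<^sub>M M) = sets (distr (PiM I (\<lambda>_. M)) (M \<Otimes>\<^sub>M M) (\<lambda>\<omega>. (\<omega> i, \<omega> j)))" by simp
  fix A B assume AB: "A \<in> sets M" "B \<in> sets M"
  define X where "X k = (if k = i then A else B)" for k
  have "(\<lambda>\<omega>. (\<omega> i, \<omega> j)) -` (A \<times> B) \<inter> space (PiM I (\<lambda>_. M)) =
      prod_emb I (\<lambda>_. M) {i, j} (Pi\<^sub>E {i, j} X)"
    using assms(2-4) by (auto simp: prod_emb_def space_PiM PiE_iff X_def)
  moreover have "(\<lambda>\<omega>. (\<omega> i, \<omega> j)) \<in> measurable (PiM I (\<lambda>_. M)) (M \<Otimes>\<^sub>M M)"
    using assms(2,3) by measurable
  ultimately have "emeasure (distr (PiM I (\<lambda>_. M)) (M \<Otimes>\<^sub>M M) (\<lambda>\<omega>. (\<omega> i, \<omega> j))) (A \<times> B) =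
      emeasure (PiM I (\<lambda>_. M)) (prod_emb I (\<lambda>_. M) {i, j} (Pi\<^sub>E {i, j} X))"
    using AB by (subst emeasure_distr) auto
  also have "\<dots> = (\<Prod>k\<in>{i, j}. emeasure M (X k))"
    using assms AB by (intro emeasure_PiM_emb) (auto simp: X_def)
  also have "\<dots> = emeasure M A * emeasure M B" using assms(4) by (simp add: X_def)
  finally show "emeasure M A * emeasure M B =
      emeasure (distr (PiM I (\<lambda>_. M)) (M \<Otimes>\<^sub>M M) (\<lambda>\<omega>. (\<omega> i, \<omega> j))) (A \<times> B)" by simp
qed

lemma integral_PiM_sum_distinct_pairs:
  fixes f :: "'a \<Rightarrow> 'a \<Rightarrow> real"
  assumes M: "prob_space M" and [measurable]: "case_prod f \<in> borel_measurable (M \<Otimes>\<^sub>M M)"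
    and bounded: "\<And>x y. \<bar>f x y\<bar> \<le> c"
  shows "(\<integral>xs. (\<Sum>i<n. \<Sum>j\<in>{..<n} - {i}. f (xs i) (xs j)) \<partial>PiM {..<n} (\<lambda>_. M)) =
      real n * (real n - 1) * (\<integral>z. f (fst z) (snd z) \<partial>(M \<Otimes>\<^sub>M M))"
proof -
  let ?P = "PiM {..<n} (\<lambda>_. M)"
  interpret P: prob_space ?P using M by (intro prob_space_PiM) auto
  have pair[measurable]: "(\<lambda>\<omega>. (\<omega> i, \<omega> j)) \<in> measurable ?P (M \<Otimes>\<^sub>M M)" if "i < n" "j < n" for i j
    using that by (intro measurable_Pair measurable_component_singleton) auto
  have integrable: "integrable ?P (\<lambda>xs. f (xs i) (xs j))" if "i < n" "j < n" for i j
    using bounded measurable_compose[OF pair[OF that], of "case_prod f"]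
    by (intro P.integrable_const_bound[where B=c]) auto
  have pair_integral: "(\<integral>xs. f (xs i) (xs j) \<partial>?P) = (\<integral>z. f (fst z) (snd z) \<partial>(M \<Otimes>\<^sub>M M))"
    if "i < n" "j < n" "i \<noteq> j" for i j
    using integral_distr[OF pair[OF that(1,2)], of "case_prod f"] distr_PiM_pair_components[OF M, of i _ j] that
    by (simp add: split_beta')
  have "(\<integral>xs. (\<Sum>i<n. \<Sum>j\<in>{..<n} - {i}. f (xs i) (xs j)) \<partial>?P) =
      (\<Sum>i<n. (\<integral>xs. (\<Sum>j\<in>{..<n} - {i}. f (xs i) (xs j)) \<partial>?P))"
    by (rule Bochner_Integration.integral_sum) (auto intro!: integrable_sum integrable)
  also have "\<dots> = (\<Sum>i<n. \<Sum>j\<in>{..<n} - {i}. (\<integral>xs. f (xs i) (xs j) \<partial>?P))"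
    by (intro sum.cong refl Bochner_Integration.integral_sum integrable) auto
  also have "\<dots> = (\<Sum>i<n. \<Sum>j\<in>{..<n} - {i}. (\<integral>z. f (fst z) (snd z) \<partial>(M \<Otimes>\<^sub>M M)))"
    using pair_integral by (intro sum.cong) auto
  also have "\<dots> = real n * (real n - 1) * (\<integral>z. f (fst z) (snd z) \<partial>(M \<Otimes>\<^sub>M M))"
    by (simp add: card_Diff_singleton of_nat_diff)
  finally show ?thesis .
qed

lemma sums_poisson_factorial_moment_2:
  fixes t :: real
  shows "(\<lambda>n. exp (- t) * t ^ n / fact n * (real n * (real n - 1))) sums t\<^sup>2"
proof -
  define g where "g n = real n * (real n - 1) * t ^ n / fact n" for n
  have "g (Suc (Suc n)) = t\<^sup>2 * (t ^ n / fact n)" for n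
  proof -
    have f: "(fact (Suc (Suc n)) :: real) = ((real n + 2) * (real n + 1)) * fact n"
      by (simp add: algebra_simps)
    have a: "real (Suc (Suc n)) * (real (Suc (Suc n)) - 1) = (real n + 2) * (real n + 1)"
      by (simp add: algebra_simps)
    have "g (Suc (Suc n)) =
        ((real n + 2) * (real n + 1)) * t ^ Suc (Suc n) / (((real n + 2) * (real n + 1)) * fact n)"
      unfolding g_def a f ..
    also have "\<dots> = t ^ Suc (Suc n) / fact n"
      by (rule mult_divide_mult_cancel_left) simp
    finally show ?thesis by (simp add: power2_eq_square)
  qed
  moreover have "(\<lambda>n. t\<^sup>2 * (t ^ n / fact n)) sums (t\<^sup>2 * exp t)"
    using exp_converges[of t] by (intro sums_mult) (simp add: divide_inverse mult.commute)
  ultimately have "(\<lambda>n. g (Suc (Suc n))) sums (t\<^sup>2 * exp t)" by simp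
  moreover have "g 0 = 0" "g (Suc 0) = 0" by (simp_all add: g_def)
  ultimately have "g sums (t\<^sup>2 * exp t)"
    using sums_Suc_iff[of "\<lambda>n. g (Suc n)"] sums_Suc_iff[of g] by simp
  then have "(\<lambda>n. exp (- t) * g n) sums (exp (- t) * (t\<^sup>2 * exp t))"
    by (rule sums_mult)
  also have "exp (- t) * (t\<^sup>2 * exp t) = t\<^sup>2" by (simp add: exp_minus)
  finally show ?thesis by (simp add: g_def mult_ac)
qed

definition chi :: "point_process \<Rightarrow> real \<Rightarrow> real" where
  "chi p t = (case p of
      Poisson_proc \<Rightarrow> t\<^sup>2
    | Binomial_proc \<Rightarrow> real (nat \<lceil>t\<rceil>) * (real (nat \<lceil>t\<rceil>) - 1))"

lemma pair_mean_eq_chi: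
  fixes K :: "'a::euclidean_space set" and f :: "'a \<Rightarrow> 'a \<Rightarrow> real"
  assumes "prob_space (uniform_measure lborel K)"
    and "case_prod f \<in> borel_measurable (uniform_measure lborel K \<Otimes>\<^sub>M uniform_measure lborel K)"
    and "\<And>x y. \<bar>f x y\<bar> \<le> c"
  shows "pair_mean p K t f = chi p t *
      (\<integral>z. f (fst z) (snd z) \<partial>(uniform_measure lborel K \<Otimes>\<^sub>M uniform_measure lborel K))"
    (is "_ = _ * ?J")
proof -
  have binomial: "binomial_pair_mean K n f = real n * (real n - 1) * ?J" for n
    unfolding binomial_pair_mean_def using assms by (rule integral_PiM_sum_distinct_pairs)
  show ?thesis
  proof (cases p)
    case Poisson_proc
    have "(\<lambda>n. exp (- t) * t ^ n / fact n * (real n * (real n - 1)) * ?J) sums (t\<^sup>2 * ?J)"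
      by (intro sums_mult2 sums_poisson_factorial_moment_2)
    then show ?thesis using Poisson_proc
      by (simp add: pair_mean_def poisson_pair_mean_def chi_def binomial sums_unique[symmetric] mult.assoc)
  next
    case Binomial_proc
    then show ?thesis by (simp add: pair_mean_def chi_def binomial)
  qed
qed

lemma abs_chi_minus_square_le:
  fixes t :: real
  assumes "1 \<le> t"
  shows "\<bar>chi p t - t\<^sup>2\<bar> \<le> t"
proof (cases p)
  case Binomial_proc
  define u where "u = real (nat \<lceil>t\<rceil>) - t"
  have "real (nat \<lceil>t\<rceil>) = of_int \<lceil>t\<rceil>" using assms by simp
  then have u: "0 \<le> u" "u < 1" unfolding u_def by linarith+
  have "chi p t - t\<^sup>2 = t * (2 * u - 1) + u * (u - 1)"
    using Binomial_proc by (simp add: chi_def u_def power2_eq_square algebra_simps)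
  moreover have "t * (2 * u - 1) + u * (u - 1) = - t + u * (u - 1 + 2 * t)"
    by (simp add: algebra_simps)
  moreover have "t * (2 * u - 1) \<le> t" "u * (u - 1) \<le> 0" "0 \<le> u * (u - 1 + 2 * t)"
    using u assms by (simp_all add: mult_left_le mult_nonneg_nonpos)
  ultimately show ?thesis by linarith
qed (use assms in \<open>simp add: chi_def\<close>)

lemma chi_tilde_le:
  fixes t :: real
  assumes "1 \<le> t"
  shows "0 \<le> chi_tilde p t" "chi_tilde p t \<le> 8 * t ^ 3"
proof -
  have "real (nat \<lceil>t\<rceil>) \<le> 2 * t" using assms by linarith
  then have "real (nat \<lceil>t\<rceil>) ^ 3 \<le> (2 * t) ^ 3" by (intro power_mono) auto
  then show "0 \<le> chi_tilde p t" "chi_tilde p t \<le> 8 * t ^ 3"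
    using assms by (cases p; simp add: chi_tilde_def power_mult_distrib)+
qed

lemma integral_indicator_pair_le_cball:
  fixes K B :: "'a::euclidean_space set"
  assumes "0 \<le> u"
  shows "(\<integral>x. indicator K x * indicator B ((x + y) /\<^sub>R 2) * indicator {..u} (norm (x - y)) \<partial>lborel)
    \<le> unit_ball_vol DIM('a) * u ^ DIM('a)"
proof (cases "integrable lborel
    (\<lambda>x. indicator K x * indicator B ((x + y) /\<^sub>R 2) * indicator {..u} (norm (x - y)) :: real)")
  case True
  have "integrable lborel (\<lambda>x. indicator (cball y u) x :: real)"
    using emeasure_compact_finite[of "cball y u"] by (intro integrable_real_indicator) auto
  then have "(\<integral>x. indicator K x * indicator B ((x + y) /\<^sub>R 2) * indicator {..u} (norm (x - y)) \<partial>lborel)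
      \<le> (\<integral>x. indicator (cball y u) x \<partial>lborel :: real)"
    using True by (intro Bochner_Integration.integral_mono) (auto simp: dist_norm norm_minus_commute split: split_indicator)
  also have "\<dots> = unit_ball_vol DIM('a) * u ^ DIM('a)"
    using content_cball[OF assms, of y] by simp
  finally show ?thesis .
qed (use assms in \<open>simp add: not_integrable_integral_eq\<close>)

lemma integral_indicator_mult_square_le:
  fixes h :: "'a::euclidean_space \<Rightarrow> real"
  assumes "K \<in> sets borel" "emeasure lborel K < \<infinity>" and "\<And>y. 0 \<le> h y" "\<And>y. h y \<le> c"
  shows "(\<integral>y. indicator K y * h y ^ 2 \<partial>lborel) \<le> c\<^sup>2 * measure lborel K"
proof (cases "integrable lborel (\<lambda>y. indicator K y * h y ^ 2)")
  case True
  have "integrable lborel (\<lambda>y. c\<^sup>2 * indicator K y :: real)"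
    using assms(1,2) by (intro integrable_mult_right integrable_real_indicator) auto
  then have "(\<integral>y. indicator K y * h y ^ 2 \<partial>lborel) \<le> (\<integral>y. c\<^sup>2 * indicator K y \<partial>lborel)"
    using True assms(3,4) by (intro Bochner_Integration.integral_mono) (auto simp: power_mono split: split_indicator)
  then show ?thesis using assms(1,2) by simp
qed (simp add: not_integrable_integral_eq)

lemma chi_tilde_integral_midpoint_square_le:
  fixes K B :: "'a::euclidean_space set"
  assumes "compact K" "measure lborel K = 1" "1 \<le> t" "0 \<le> u"
  shows "chi_tilde p t * (\<integral>y. indicator K y *
      (\<integral>x. indicator K x * indicator B ((x + y) /\<^sub>R 2) * indicator {..u} (norm (x - y)) \<partial>lborel) ^ 2
      \<partial>lborel) \<le> 8 * t ^ 3 * measure lborel (ball (0::'a) 1) ^ 2 * u ^ (2 * DIM('a))"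
    (is "_ * ?I \<le> _")
proof -
  have "?I \<le> (unit_ball_vol DIM('a) * u ^ DIM('a))\<^sup>2 * measure lborel K"
    using assms(1,4) emeasure_compact_finite[OF assms(1)]
    by (intro integral_indicator_mult_square_le integral_indicator_pair_le_cball Bochner_Integration.integral_nonneg)
      (auto simp: borel_compact)
  also have "\<dots> = measure lborel (ball (0::'a) 1) ^ 2 * u ^ (2 * DIM('a))"
    using assms(2) content_ball[of 1 "0::'a"] by (simp add: power_mult_distrib power_mult[symmetric] mult.commute)
  finally have "?I \<le> measure lborel (ball (0::'a) 1) ^ 2 * u ^ (2 * DIM('a))" .
  moreover have "0 \<le> ?I" by (intro Bochner_Integration.integral_nonneg) simp
  ultimately have "chi_tilde p t * ?I \<le> (8 * t ^ 3) * (measure lborel (ball (0::'a) 1) ^ 2 * u ^ (2 * DIM('a)))"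
    using chi_tilde_le[OF assms(3), of p] assms(3) by (intro mult_mono) auto
  then show ?thesis by (simp add: mult.assoc)
qed

lemma pair_mean_midpoint_indicator_eq:
  fixes K B :: "'a::euclidean_space set" and A :: "real set"
  assumes [measurable]: "K \<in> sets borel" "B \<in> sets borel" "A \<in> sets borel" and "emeasure lborel K = 1"
  shows "pair_mean p K t (\<lambda>x y. indicator B ((x + y) /\<^sub>R 2) * indicator A (norm (x - y))) = chi p t *
    (\<integral>z. indicator B ((fst z + snd z) /\<^sub>R 2) * indicator A (norm (fst z - snd z))
      \<partial>(uniform_measure lborel K \<Otimes>\<^sub>M uniform_measure lborel K))"
proof -
  define f :: "'a \<Rightarrow> 'a \<Rightarrow> real" where "f x y = indicator B ((x + y) /\<^sub>R 2) * indicator A (norm (x - y))" for x y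
  have "prob_space (uniform_measure lborel K)" using assms(4) by (intro prob_space_uniform_measure) auto
  moreover have "sets (uniform_measure lborel K \<Otimes>\<^sub>M uniform_measure lborel K) = sets (borel \<Otimes>\<^sub>M borel)"
    by (intro sets_pair_measure_cong) simp_all
  then have "case_prod f \<in> borel_measurable (uniform_measure lborel K \<Otimes>\<^sub>M uniform_measure lborel K)"
    unfolding measurable_cong_sets[OF \<open>sets _ = _\<close> refl] f_def by measurable
  ultimately show ?thesis
    unfolding f_def[symmetric] by (rule pair_mean_eq_chi[where c = 1]) (simp add: f_def split: split_indicator)
qed

lemma pair_mean_midpoint_estimate:
  fixes K B :: "'a::euclidean_space set" and A :: "real set"
  assumes [measurable]: "K \<in> sets borel" "B \<in> sets borel" "A \<in> sets borel"
    and K: "emeasure lborel K = 1" and "B \<subseteq> K" and "A \<subseteq> {0..a}" and "0 \<le> a" and "1 \<le> t"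
    and translate: "\<And>v. emeasure lborel (K - (+) v ` K) \<le> ennreal (D * norm v)" and "0 \<le> D"
  defines "\<kappa> \<equiv> measure lborel (ball (0::'a) 1)" and "d \<equiv> DIM('a)"
  shows "\<bar>1/2 * pair_mean p K t (\<lambda>x y. indicator B ((x + y) /\<^sub>R 2) * indicator A (norm (x - y)))
      - \<kappa> / 2 * measure lborel B * t\<^sup>2 * d * (\<integral>r. indicator A r * r ^ (d - 1) \<partial>lborel)\<bar>
    \<le> D / 2 * \<kappa> * t\<^sup>2 * a ^ (d + 1) + \<kappa> / 2 * t * a ^ d"
proof -
  define J :: real where "J = (\<integral>z. indicator B ((fst z + snd z) /\<^sub>R 2) * indicator A (norm (fst z - snd z))
      \<partial>(uniform_measure lborel K \<Otimes>\<^sub>M uniform_measure lborel K))"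
  define P :: real where "P = (\<integral>z. indicator A (norm z) \<partial>(lborel::'a measure))"
  have "0 \<le> J" unfolding J_def by (intro Bochner_Integration.integral_nonneg) simp
  have \<kappa>: "\<kappa> = unit_ball_vol d" using content_ball[of 1 "0::'a"] by (simp add: \<kappa>_def d_def)
  note est = uniform_pair_midpoint_integral_estimate[OF assms(1-3) K assms(5-7) translate \<open>0 \<le> D\<close>,
      folded J_def P_def d_def \<kappa>]
  have "\<bar>(chi p t - t\<^sup>2) * J\<bar> \<le> t * (\<kappa> * a ^ d)"
    using abs_chi_minus_square_le[OF \<open>1 \<le> t\<close>, of p] \<open>0 \<le> J\<close> est(1,3) \<kappa>
    by (simp add: abs_mult mult_mono)
  moreover have "\<bar>t\<^sup>2 * (J - measure lborel B * P)\<bar> \<le> t\<^sup>2 * (D * a * (\<kappa> * a ^ d))"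
  proof -
    have "D * a * P \<le> D * a * (\<kappa> * a ^ d)"
      using est(3) \<kappa> \<open>0 \<le> D\<close> \<open>0 \<le> a\<close> by (intro mult_left_mono) auto
    then show ?thesis using est(2) by (simp add: abs_mult mult_left_mono)
  qed
  moreover have "P = \<kappa> * d * (\<integral>r. indicator A r * r ^ (d - 1) \<partial>lborel)"
    unfolding P_def \<kappa> d_def using assms(3,6,7) by (rule integral_indicator_norm)
  ultimately show ?thesis
    unfolding pair_mean_midpoint_indicator_eq[OF assms(1-3) K, folded J_def]
    by (auto simp: abs_le_iff algebra_simps)
qed

theorem lemma7p14:
  fixes K :: "'a::euclidean_space set"
  assumes "compact K" and "convex K" and "measure lborel K = 1"
  shows "\<exists>C>0. \<forall>p t. t \<ge> 1 \<longrightarrow>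
      (\<forall>B A a. B \<in> sets borel \<and> B \<subseteq> K \<and> A \<in> sets borel \<and> A \<subseteq> {0..a} \<and> a > 0 \<longrightarrow>
         \<bar>1/2 * pair_mean p K t
              (\<lambda>x y. indicator B ((x + y) /\<^sub>R 2) * indicator A (norm (x - y)))
          - measure lborel (ball (0::'a) 1) / 2 * measure lborel B * t^2 * real DIM('a)
              * (\<integral>r. indicator A r * r ^ (DIM('a) - 1) \<partial>lborel)\<bar>
         \<le> 2 * C * measure lborel (ball (0::'a) 1) * t^2 * (a ^ (DIM('a) + 1) + a ^ (2 * DIM('a)))
           + measure lborel (ball (0::'a) 1) / 2 * t * a ^ DIM('a)) \<and>
      (\<forall>B u. B \<in> sets borel \<and> B \<subseteq> K \<and> u \<ge> 0 \<longrightarrow>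
         chi_tilde p t * (\<integral>y. indicator K y *
             (\<integral>x. indicator K x * indicator B ((x + y) /\<^sub>R 2) * indicator {..u} (norm (x - y)) \<partial>lborel) ^ 2
           \<partial>lborel)
         \<le> 8 * t^3 * measure lborel (ball (0::'a) 1) ^ 2 * u ^ (2 * DIM('a)))"
proof -
  have K: "K \<in> sets borel" "emeasure lborel K = 1"
    using assms emeasure_compact_finite[OF assms(1)] by (auto simp: borel_compact emeasure_eq_ennreal_measure)
  obtain D where "0 < D" and translate: "\<And>v. emeasure lborel (K - (+) v ` K) \<le> ennreal (D * norm v)"
    using exists_emeasure_Diff_translation_le[OF assms(1,2)] assms(3) by auto
  show ?thesis
    apply (intro exI[of _ "D / 4"] conjI allI impI)
    subgoal using \<open>0 < D\<close> by simp
    subgoal for p t B A a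
      using pair_mean_midpoint_estimate[OF K(1) _ _ K(2) _ _ _ _ translate, of B A a t p] \<open>0 < D\<close>
        zero_le_power[of a "2 * DIM('a)"]
      by (auto simp: algebra_simps intro: order.trans)
    subgoal for p t B u
      using chi_tilde_integral_midpoint_square_le[OF assms(1,3)] by blast
    done
qed

end
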